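(* Let $\lambda_0,\dots,\lambda_n\in\mathbb{C}$, $n\ge1$, and $a\neq b$ real, and suppose $E_{(\lambda_0,\dots,\lambda_n)}$ and $E_{(\lambda_0,\dots,\lambda_{n-1})}$ are extended Chebyshev systems for $\{a,b\}$. For $k=0,\dots,n-1$ the limit $$d_k:=\lim_{x\to b}\frac{\frac{d}{dx}p_{(\lambda_0,\dots,\lambda_n),k}(x)}{p_{(\lambda_0,\dots,\lambda_{n-1}),k}(x)}$$ exists and is nonzero, and $$\Big(\frac{d}{dx}-\lambda_n\Big)p_{(\lambda_0,\dots,\lambda_n),k}=p_{(\lambda_0,\dots,\lambda_{n-1}),k-1}+d_k\,p_{(\lambda_0,\dots,\lambda_{n-1}),k}\quad\text{for }k=1,\dots,n-1,$$ while $(\frac{d}{dx}-\lambda_n)p_{(\lambda_0,\dots,\lambda_n),0}=d_0\,p_{(\lambda_0,\dots,\lambda_{n-1}),0}$ and $(\frac{d}{dx}-\lambda_n)p_{(\lambda_0,\dots,\lambda_n),n}=p_{(\lambda_0,\dots,\lambda_{n-1}),n-1}$.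
   Context: $E_{(\lambda_0,\dots,\lambda_m)}$ denotes the space of all $f\in C^\infty(\mathbb{R},\mathbb{C})$ with $(\frac{d}{dx}-\lambda_0)\cdots(\frac{d}{dx}-\lambda_m)f=0$ (dimension $m+1$). A zero of order (exactly) $k$ at $a$ means $f(a)=\dots=f^{(k-1)}(a)=0$, $f^{(k)}(a)\neq0$. $E_{(\lambda_0,\dots,\lambda_m)}$ is an extended Chebyshev system for $A\subset\mathbb{R}$ if every nonzero element has at most $m$ zeros in $A$ counted with multiplicity. In that case, for $A=\{a,b\}$, $a\ne b$, the Bernstein basis $p_{(\lambda_0,\dots,\lambda_m),k}$, $k=0,\dots,m$, is the unique family in $E_{(\lambda_0,\dots,\lambda_m)}$ with $p_{(\lambda_0,\dots,\lambda_m),k}$ having a zero of order exactly $k$ at $a$ and exactly $m-k$ at $b$, and $p^{(k)}_{(\lambda_0,\dots,\lambda_m),k}(a)=1$. *)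

theory Defs
  imports "HOL-Analysis.Analysis"
begin

fun nderiv :: "nat \<Rightarrow> (real \<Rightarrow> complex) \<Rightarrow> real \<Rightarrow> complex" where
  "nderiv 0 f = f"
| "nderiv (Suc k) f = (\<lambda>x. vector_derivative (nderiv k f) (at x))"

definition cinf :: "(real \<Rightarrow> complex) \<Rightarrow> bool" where
  "cinf f \<longleftrightarrow> (\<forall>k x. nderiv k f differentiable (at x))"

fun diffop :: "complex list \<Rightarrow> (real \<Rightarrow> complex) \<Rightarrow> real \<Rightarrow> complex" where
  "diffop [] f = f"
| "diffop (l # ls) f = (\<lambda>x. nderiv 1 (diffop ls f) x - l * diffop ls f x)"

definition Espace :: "complex list \<Rightarrow> (real \<Rightarrow> complex) set" where
  "Espace ls = {f. cinf f \<and> diffop ls f = (\<lambda>x. 0)}"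

definition zero_order :: "(real \<Rightarrow> complex) \<Rightarrow> real \<Rightarrow> nat \<Rightarrow> bool" where
  "zero_order f a k \<longleftrightarrow> (\<forall>j<k. nderiv j f a = 0) \<and> nderiv k f a \<noteq> 0"

text \<open>Extended Chebyshev system for A: every nonzero element has at most m zeros in A
  counted with multiplicity (m = length ls - 1): whenever f vanishes to order at least
  mult x at each point x of a finite S \<subseteq> A, the sum of the mult x is at most m.\<close>
definition ext_cheb :: "complex list \<Rightarrow> real set \<Rightarrow> bool" where
  "ext_cheb ls A \<longleftrightarrow>
     (\<forall>f\<in>Espace ls. f \<noteq> (\<lambda>x. 0) \<longrightarrow>
        (\<forall>S mult. finite S \<and> S \<subseteq> A \<and> (\<forall>x\<in>S. \<forall>j<mult x. nderiv j f x = 0)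
            \<longrightarrow> sum mult S \<le> length ls - 1))"

definition bern :: "complex list \<Rightarrow> real \<Rightarrow> real \<Rightarrow> nat \<Rightarrow> real \<Rightarrow> complex" where
  "bern ls a b k = (THE p. p \<in> Espace ls \<and> zero_order p a k
        \<and> zero_order p b (length ls - 1 - k) \<and> nderiv k p a = 1)"

end

theory Submission
  imports Defs "Jordan_Normal_Form.Determinant"
begin

(* Write ls = bl @ [l] with l = last ls, and let P k = bern ls a b k, Q k = bern bl a b k.
   Since diffop ls = diffop bl o (D - l), the function q k = (D - l) P k lies in E_bl.
   The Hermite data of q k are read off from those of P k: at a it vanishes to order k-1
   with (k-1)-th derivative 1, at b it vanishes to order n-k-1 with (n-k-1)-th derivative
   P_k^(n-k)(b).  In an extended Chebyshev space for {a,b} of dimension n an element is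
   determined by its first i derivatives at a and first r derivatives at b when i + r >= n,
   so comparing data identifies q k with Q (k-1) + d k * Q k, where
   d k = P_k^(n-k)(b) / Q_k^(n-k-1)(b).  The same numbers are the limits of P_k' / Q_k at b,
   by a Taylor quotient argument (iterated l'Hopital on real and imaginary parts). *)

section \<open>Derivatives, smoothness and linearity\<close>

lemma nderiv_Suc_inner: "nderiv (Suc k) f = nderiv k (nderiv 1 f)"
  by (induction k) auto

lemma nderiv_zero_fun: "nderiv k (\<lambda>x. 0::complex) = (\<lambda>x. 0)"
  by (induction k) (auto simp: vector_derivative_at)

lemma cinf_zero_fun: "cinf (\<lambda>x. 0)"
  by (simp add: cinf_def nderiv_zero_fun)

lemma cinf_has_vector_derivative:
  "cinf f \<Longrightarrow> (nderiv i f has_vector_derivative nderiv (Suc i) f t) (at t)"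
  unfolding cinf_def by (simp add: vector_derivative_works[symmetric])

lemma cinf_nderiv_continuous: "cinf f \<Longrightarrow> isCont (nderiv i f) t"
  unfolding cinf_def by (simp add: differentiable_imp_continuous_within)

lemma cinf_deriv: "cinf f \<Longrightarrow> cinf (nderiv 1 f)"
  unfolding cinf_def by (metis nderiv_Suc_inner)

lemma has_vector_derivative_lincomb:
  fixes f g :: "real \<Rightarrow> complex"
  assumes "f differentiable at x" "g differentiable at x"
  shows "((\<lambda>x. c * f x + d * g x) has_vector_derivative
           (c * vector_derivative f (at x) + d * vector_derivative g (at x))) (at x)"
  using assms
  by (intro has_vector_derivative_add has_vector_derivative_mult_right)
     (simp_all add: vector_derivative_works[symmetric])

lemma nderiv1_lincomb:
  assumes "\<And>x. f differentiable at x" "\<And>x. g differentiable at x"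
  shows "nderiv 1 (\<lambda>x. c * f x + d * g x) = (\<lambda>x. c * nderiv 1 f x + d * nderiv 1 g x)"
  using assms by (auto simp: vector_derivative_at[OF has_vector_derivative_lincomb])

lemma nderiv_lincomb:
  assumes "cinf f" "cinf g"
  shows "nderiv k (\<lambda>x. c * f x + d * g x) = (\<lambda>x. c * nderiv k f x + d * nderiv k g x)"
proof (induction k)
  case (Suc k)
  then show ?case
    using assms nderiv1_lincomb[of "nderiv k f" "nderiv k g" c d] by (simp add: cinf_def)
qed simp

lemma cinf_lincomb:
  assumes "cinf f" "cinf g"
  shows "cinf (\<lambda>x. c * f x + d * g x)"
  using assms unfolding cinf_def nderiv_lincomb[OF assms]
  by (blast intro: differentiableI_vector has_vector_derivative_lincomb)

lemma diffop_snoc: "diffop (xs @ [l]) f = diffop xs (diffop [l] f)"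
  by (induction xs) auto

lemma diffop_zero_fun: "diffop ls (\<lambda>x. 0) = (\<lambda>x. 0)"
  by (induction ls) (auto simp: vector_derivative_at)

lemma diffop_cinf: "cinf f \<Longrightarrow> cinf (diffop ls f)"
proof (induction ls)
  case (Cons l ls)
  have "diffop (l # ls) f = (\<lambda>x. 1 * nderiv 1 (diffop ls f) x + (- l) * diffop ls f x)"
    by auto
  then show ?case using Cons by (simp only:) (intro cinf_lincomb cinf_deriv; simp)
qed simp

lemma diffop_lincomb:
  assumes "cinf f" "cinf g"
  shows "diffop ls (\<lambda>x. c * f x + d * g x) = (\<lambda>x. c * diffop ls f x + d * diffop ls g x)"
proof (induction ls)
  case (Cons l ls)
  have "cinf (diffop ls f)" "cinf (diffop ls g)"
    using assms by (auto intro: diffop_cinf)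
  then show ?case
    using Cons by (simp add: nderiv_lincomb[where k=1, simplified] algebra_simps)
qed simp

lemma nderiv_diffop_single:
  assumes "cinf f"
  shows "nderiv j (diffop [l] f) x = nderiv (Suc j) f x - l * nderiv j f x"
proof -
  have "diffop [l] f = (\<lambda>x. 1 * nderiv 1 f x + (- l) * f x)"
    by auto
  then have "nderiv j (diffop [l] f) x = 1 * nderiv j (nderiv 1 f) x + (- l) * nderiv j f x"
    by (simp only: nderiv_lincomb[OF cinf_deriv[OF assms] assms])
  then show ?thesis
    by (simp only: nderiv_Suc_inner) simp
qed

section \<open>The solution spaces\<close>

lemma Espace_zero_fun: "(\<lambda>x. 0) \<in> Espace ls"
  by (simp add: Espace_def cinf_zero_fun diffop_zero_fun)

lemma Espace_lincomb:
  assumes "f \<in> Espace ls" "g \<in> Espace ls"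
  shows "(\<lambda>x. c * f x + d * g x) \<in> Espace ls"
  using assms unfolding Espace_def by (auto simp: diffop_lincomb cinf_lincomb)

lemma Espace_cinf: "f \<in> Espace ls \<Longrightarrow> cinf f"
  by (simp add: Espace_def)

lemma Espace_sum:
  fixes N :: nat
  assumes "\<And>j. j < N \<Longrightarrow> f j \<in> Espace ls"
  shows "(\<lambda>x. \<Sum>j<N. v j * f j x) \<in> Espace ls
     \<and> (\<forall>k. nderiv k (\<lambda>x. \<Sum>j<N. v j * f j x) = (\<lambda>x. \<Sum>j<N. v j * nderiv k (f j) x))"
  using assms
proof (induction N)
  case 0
  then show ?case by (simp add: Espace_zero_fun nderiv_zero_fun)
next
  case (Suc N)
  then have IH: "(\<lambda>x. \<Sum>j<N. v j * f j x) \<in> Espace ls" "f N \<in> Espace ls"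
    "\<And>k. nderiv k (\<lambda>x. \<Sum>j<N. v j * f j x) = (\<lambda>x. \<Sum>j<N. v j * nderiv k (f j) x)"
    by auto
  show ?case
    using Espace_lincomb[OF IH(1,2), of 1 "v N"]
      nderiv_lincomb[OF IH(1,2)[THEN Espace_cinf], of _ 1 "v N"] IH(3)
    by simp
qed

lemma diffop_single_Espace:
  assumes "f \<in> Espace (xs @ [l])"
  shows "diffop [l] f \<in> Espace xs"
  using assms diffop_cinf[of f "[l]"] by (simp add: Espace_def diffop_snoc)

section \<open>Initial value problems\<close>

text \<open>The first-order equation f' = l f + g with smooth g has a smooth solution through any
  point: f x = exp (l x) (F x + C) with F an antiderivative of exp (- l t) g t.\<close>
lemma first_order_ode_solvable:
  assumes g: "cinf g"
  shows "\<exists>f. cinf f \<and> nderiv 1 f = (\<lambda>x. l * f x + g x) \<and> f a = c"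
proof -
  let ?h = "\<lambda>t. exp (- l * of_real t) * g t"
  have "isCont ?h x" for x
    using cinf_nderiv_continuous[OF g, where i=0 and t=x] by (intro continuous_intros) simp
  then obtain F where F: "\<And>x. (F has_vector_derivative ?h x) (at x)"
    using einterval_antiderivative[of "-\<infinity>" "\<infinity>" ?h] by auto
  define C where "C = c * exp (- l * of_real a) - F a"
  define f where "f = (\<lambda>x. exp (l * of_real x) * (F x + C))"
  have exp_deriv: "((\<lambda>x. exp (l * of_real x)) has_vector_derivative l * exp (l * of_real x)) (at x)"
    for x
    by (rule has_vector_derivative_real_field) (auto intro!: derivative_eq_intros)
  have f_deriv: "(f has_vector_derivative (l * f x + g x)) (at x)" for x
  proof -
    have "(f has_vector_derivative
            (exp (l * of_real x) * ?h x + l * exp (l * of_real x) * (F x + C))) (at x)"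
      unfolding f_def using F by (intro has_vector_derivative_mult exp_deriv)
        (simp add: has_vector_derivative_add_const)
    moreover have "exp (l * of_real x) * ?h x + l * exp (l * of_real x) * (F x + C) = l * f x + g x"
      by (simp add: f_def algebra_simps exp_minus field_simps exp_add[symmetric])
    ultimately show ?thesis by simp
  qed
  then have f_eq: "nderiv 1 f = (\<lambda>x. l * f x + g x)"
    by (auto simp: vector_derivative_at)
  have "nderiv k f differentiable at x \<and> nderiv (Suc k) f = (\<lambda>x. l * nderiv k f x + nderiv k g x)"
    for k x
  proof (induction k arbitrary: x)
    case 0
    then show ?case using f_deriv f_eq by (auto intro: differentiableI_vector)
  next
    case (Suc k)
    have diff_k: "nderiv k f differentiable at x" "nderiv k g differentiable at x" for x
      using Suc g by (auto simp: cinf_def)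
    have "nderiv (Suc (Suc k)) f = nderiv 1 (\<lambda>x. l * nderiv k f x + 1 * nderiv k g x)"
      using Suc by simp
    also have "\<dots> = (\<lambda>x. l * nderiv (Suc k) f x + nderiv (Suc k) g x)"
      by (simp only: nderiv1_lincomb diff_k) simp
    moreover have "nderiv (Suc k) f differentiable at x"
      using Suc diff_k has_vector_derivative_lincomb[OF diff_k, of x l 1]
      by (auto intro: differentiableI_vector)
    ultimately show ?case by simp
  qed
  then have "cinf f" by (simp add: cinf_def)
  moreover have "f a = c" by (simp add: f_def C_def exp_minus field_simps)
  ultimately show ?thesis using f_eq by blast
qed

text \<open>Every initial value problem for diffop ls at a point is solvable in
  Espace ls: peel off the last factor and solve a first-order equation.\<close>
lemma Espace_initial_values:
  "\<exists>f \<in> Espace ls. \<forall>j < length ls. nderiv j f a = v j"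
proof (induction ls arbitrary: v rule: rev_induct)
  case Nil
  then show ?case using Espace_zero_fun by auto
next
  case (snoc l xs)
  obtain g where g: "g \<in> Espace xs" "\<And>j. j < length xs \<Longrightarrow> nderiv j g a = v (Suc j) - l * v j"
    using snoc.IH[of "\<lambda>j. v (Suc j) - l * v j"] by auto
  obtain f where f: "cinf f" "nderiv 1 f = (\<lambda>x. l * f x + g x)" "f a = v 0"
    using first_order_ode_solvable[OF Espace_cinf[OF g(1)]] by blast
  have "diffop [l] f = g" using f(2) by auto
  then have "f \<in> Espace (xs @ [l])"
    using f(1) g(1) by (simp add: Espace_def diffop_snoc)
  moreover have "nderiv j f a = v j" if "j \<le> length xs" for j
    using that
  proof (induction j)
    case (Suc j)
    have "nderiv (Suc j) f a = nderiv j (diffop [l] f) a + l * nderiv j f a"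
      using nderiv_diffop_single[OF f(1)] by simp
    then show ?case using Suc g(2)[of j] \<open>diffop [l] f = g\<close> by simp
  qed (use f(3) in simp)
  ultimately show ?case by (auto simp: less_Suc_eq_le)
qed

lemma Espace_unit_basis:
  obtains basis where "\<And>j. basis j \<in> Espace ls"
    "\<And>j h. h < length ls \<Longrightarrow> nderiv h (basis j) a = (if h = j then 1 else 0)"
proof -
  have "\<exists>f \<in> Espace ls. \<forall>h<length ls. nderiv h f a = (if h = j then 1 else 0)" for j
    using Espace_initial_values[of ls a "\<lambda>h. if h = j then 1 else 0"] .
  then show ?thesis using that by metis
qed
section \<open>Extended Chebyshev spaces for two points\<close>

lemma ext_cheb_vanishing:
  assumes "ext_cheb ls {a, b}" "a \<noteq> b" "f \<in> Espace ls"
    and "\<forall>j<i. nderiv j f a = 0" "\<forall>j<r. nderiv j f b = 0" "length ls \<le> i + r"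
  shows "f = (\<lambda>x. 0)"
proof (cases "ls = []")
  case True
  then show ?thesis using assms(3) by (simp add: Espace_def)
next
  case False
  show ?thesis
  proof (rule ccontr)
    assume "f \<noteq> (\<lambda>x. 0)"
    define mult where "mult = (\<lambda>x. if x = a then i else r)"
    have "\<forall>x\<in>{a, b}. \<forall>j<mult x. nderiv j f x = 0"
      using assms(2,4,5) by (auto simp: mult_def)
    moreover have "\<forall>S mult. finite S \<and> S \<subseteq> {a, b} \<and> (\<forall>x\<in>S. \<forall>j<mult x. nderiv j f x = 0)
        \<longrightarrow> sum mult S \<le> length ls - 1"
      using assms(1,3) \<open>f \<noteq> (\<lambda>x. 0)\<close> unfolding ext_cheb_def by simp
    ultimately have "sum mult {a, b} \<le> length ls - 1" by simp
    moreover have "sum mult {a, b} = i + r" using assms(2) by (simp add: mult_def)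
    moreover have "length ls > 0" using False by simp
    ultimately show False using assms(6) by linarith
  qed
qed

lemma ext_cheb_agree:
  assumes "ext_cheb ls {a, b}" "a \<noteq> b" "f \<in> Espace ls" "g \<in> Espace ls"
    and "\<forall>j<i. nderiv j f a = nderiv j g a" "\<forall>j<r. nderiv j f b = nderiv j g b"
    and "length ls \<le> i + r"
  shows "f = g"
proof -
  have diff_E: "(\<lambda>x. f x - g x) \<in> Espace ls"
    using Espace_lincomb[OF assms(3,4), of 1 "- 1"] by simp
  have diff: "nderiv j (\<lambda>x. f x - g x) x = nderiv j f x - nderiv j g x" for j x
    using nderiv_lincomb[OF assms(3,4)[THEN Espace_cinf], of j 1 "- 1"] by simp
  have "(\<lambda>x. f x - g x) = (\<lambda>x. 0)"
    using assms(5-7) by (intro ext_cheb_vanishing[OF assms(1,2) diff_E]) (auto simp: diff)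
  then have "f x = g x" for x
    using fun_cong[of "\<lambda>x. f x - g x" "\<lambda>x. 0" x] by simp
  then show ?thesis by (rule ext)
qed

lemma mat_trivial_kernel_surjective:
  fixes M :: "'a :: field mat"
  assumes M: "M \<in> carrier_mat N N" and ker: "\<And>w. w \<in> carrier_vec N \<Longrightarrow> M *\<^sub>v w = 0\<^sub>v N \<Longrightarrow> w = 0\<^sub>v N"
    and t: "t \<in> carrier_vec N"
  shows "\<exists>w \<in> carrier_vec N. M *\<^sub>v w = t"
proof -
  have "det M \<noteq> 0" using det_0_iff_vec_prod_zero_field[OF M] ker by auto
  then have "M \<in> Units (ring_mat TYPE('a) N ())" by (rule det_non_zero_imp_unit[OF M])
  then obtain B where B: "B \<in> carrier_mat N N" "M * B = 1\<^sub>m N"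
    by (auto simp: Units_def ring_mat_def)
  have "M *\<^sub>v (B *\<^sub>v t) = (M * B) *\<^sub>v t" using M B(1) t by (simp add: assoc_mult_mat_vec)
  then show ?thesis using B t by (intro bexI[of _ "B *\<^sub>v t"]) auto
qed

text \<open>Hermite interpolation with i conditions at a and r at b, i + r equal to the dimension,
  is always solvable: in terms of the unit basis the data map is a square matrix M, which
  has trivial kernel by ext_cheb_vanishing and is therefore surjective.\<close>
lemma ext_cheb_hermite_interpolation:
  assumes cheb: "ext_cheb ls {a, b}" "a \<noteq> b" and dim: "i + r = length ls"
  shows "\<exists>f \<in> Espace ls. (\<forall>j<i. nderiv j f a = va j) \<and> (\<forall>j<r. nderiv j f b = vb j)"
proof -
  define N where "N = length ls"
  obtain basis where basis: "\<And>j. basis j \<in> Espace ls"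
      "\<And>j h. h < N \<Longrightarrow> nderiv h (basis j) a = (if h = j then 1 else 0)"
    using Espace_unit_basis[of ls a] unfolding N_def by metis
  define data where "data = (\<lambda>h f. if h < i then nderiv h f a else nderiv (h - i) f b)"
  define comb where "comb = (\<lambda>w :: complex vec. \<lambda>x. \<Sum>j<N. w $ j * basis j x)"
  have comb: "comb w \<in> Espace ls" "\<And>h. nderiv h (comb w) = (\<lambda>x. \<Sum>j<N. w $ j * nderiv h (basis j) x)"
    for w
    unfolding comb_def using Espace_sum[of N basis ls "\<lambda>j. w $ j"] basis(1) by auto
  have data_comb: "data h (comb w) = (\<Sum>j<N. w $ j * data h (basis j))" for h w
    by (simp add: data_def comb)
  define M where "M = mat N N (\<lambda>(h, j). data h (basis j))"
  have M: "M \<in> carrier_mat N N" by (simp add: M_def)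
  have M_comb: "(M *\<^sub>v w) $ h = data h (comb w)" if "h < N" "w \<in> carrier_vec N" for h w
    using that
    by (simp add: M_def data_comb scalar_prod_def row_def atLeast0LessThan mult.commute)
  have "w = 0\<^sub>v N" if w: "w \<in> carrier_vec N" "M *\<^sub>v w = 0\<^sub>v N" for w
  proof -
    have data_0: "data h (comb w) = 0" if "h < N" for h
      using M_comb[OF that w(1)] w(2) that by simp
    have "nderiv j (comb w) a = 0" if "j < i" for j
      using data_0[of j] that dim N_def by (simp add: data_def)
    moreover have "nderiv j (comb w) b = 0" if "j < r" for j
      using data_0[of "i + j"] that dim N_def by (simp add: data_def)
    ultimately have "comb w = (\<lambda>x. 0)"
      using dim by (intro ext_cheb_vanishing[OF cheb comb(1)[of w], of i r]) auto
    then have "nderiv h (comb w) a = 0" for h by (simp add: nderiv_zero_fun)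
    moreover have "nderiv h (comb w) a = w $ h" if "h < N" for h
      using that by (simp add: comb basis(2) if_distrib cong: if_cong)
    ultimately show ?thesis using w(1) by (intro eq_vecI) auto
  qed
  then obtain w where w: "w \<in> carrier_vec N"
      "M *\<^sub>v w = vec N (\<lambda>h. if h < i then va h else vb (h - i))"
    using mat_trivial_kernel_surjective[OF M, of "vec N (\<lambda>h. if h < i then va h else vb (h - i))"]
    by auto
  have data_w: "data h (comb w) = (if h < i then va h else vb (h - i))" if "h < N" for h
    using M_comb[OF that w(1)] w(2) that by simp
  have "nderiv j (comb w) a = va j" if "j < i" for j
    using data_w[of j] that dim N_def by (simp add: data_def)
  moreover have "nderiv j (comb w) b = vb j" if "j < r" for j
    using data_w[of "i + j"] that dim N_def by (simp add: data_def)
  ultimately show ?thesis using comb(1) by blast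
qed

section \<open>The Bernstein basis\<close>

lemma zero_order_below: "zero_order p c k \<Longrightarrow> j < k \<Longrightarrow> nderiv j p c = 0"
  by (simp add: zero_order_def)

lemma diffop_single_zero_order:
  assumes "cinf p" "zero_order p c k" "j < k"
  shows "nderiv j (diffop [l] p) c = (if Suc j = k then nderiv k p c else 0)"
proof -
  have "nderiv j (diffop [l] p) c = nderiv (Suc j) p c - l * nderiv j p c"
    by (rule nderiv_diffop_single[OF assms(1)])
  also have "\<dots> = nderiv (Suc j) p c"
    using zero_order_below[OF assms(2,3)] by simp
  also have "\<dots> = (if Suc j = k then nderiv k p c else 0)"
    using assms(3) zero_order_below[OF assms(2), of "Suc j"] by (cases "Suc j = k") auto
  finally show ?thesis .
qed

lemma bern_props:
  assumes cheb: "ext_cheb ls {a, b}" "a \<noteq> b" and len: "length ls = m + 1" and "k \<le> m"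
  shows "bern ls a b k \<in> Espace ls \<and> zero_order (bern ls a b k) a k
     \<and> zero_order (bern ls a b k) b (m - k) \<and> nderiv k (bern ls a b k) a = 1"
proof -
  let ?bern = "\<lambda>p. p \<in> Espace ls \<and> zero_order p a k \<and> zero_order p b (m - k) \<and> nderiv k p a = 1"
  obtain p where p: "p \<in> Espace ls" "\<forall>j<Suc k. nderiv j p a = (if j = k then 1 else 0)"
      "\<forall>j<m - k. nderiv j p b = 0"
    using ext_cheb_hermite_interpolation[OF cheb, of "Suc k" "m - k"] len \<open>k \<le> m\<close> by force
  have "nderiv (m - k) p b \<noteq> 0"
  proof
    assume "nderiv (m - k) p b = 0"
    then have "\<forall>j<Suc (m - k). nderiv j p b = 0" using p(3) less_Suc_eq by auto
    then have "p = (\<lambda>x. 0)"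
      using p(2) len \<open>k \<le> m\<close> by (intro ext_cheb_vanishing[OF cheb p(1), of k]) auto
    then show False using p(2)[rule_format, of k] by (simp add: nderiv_zero_fun)
  qed
  then have "?bern p" using p by (auto simp: zero_order_def)
  moreover have "q = p" if "?bern q" for q
    using that \<open>?bern p\<close> len
    by (intro ext_cheb_agree[OF cheb, of q p "Suc k" "m - k"]) (auto simp: zero_order_def less_Suc_eq)
  ultimately have "\<exists>!p. ?bern p" by blast
  then have "?bern (THE p. ?bern p)" by (rule theI')
  moreover have "length ls - 1 - k = m - k" using len by simp
  ultimately show ?thesis unfolding bern_def by (simp only:)
qed

section \<open>A Taylor quotient limit\<close>

text \<open>If D 0, D 1, ... is a chain of derivatives with D i b = 0 for i < m, then
  D 0 x / (x - b)^m tends to D m b / m! at b.  By induction on m, each step being one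
  application of l'Hopital's rule.\<close>
lemma real_taylor_quotient:
  fixes D :: "nat \<Rightarrow> real \<Rightarrow> real"
  assumes "\<And>i t. DERIV (D i) t :> D (Suc i) t" and "\<And>i. i < m \<Longrightarrow> D i b = 0"
  shows "((\<lambda>x. D 0 x / (x - b) ^ m) \<longlongrightarrow> D m b / fact m) (at b)"
  using assms
proof (induction m arbitrary: D)
  case 0
  then have "isCont (D 0) b" by (intro DERIV_isCont)
  then show ?case by (simp add: isCont_def)
next
  case (Suc m)
  have "((\<lambda>x. D (Suc 0) x / (x - b) ^ m) \<longlongrightarrow> D (Suc m) b / fact m) (at b)"
    using Suc.IH[of "\<lambda>i. D (Suc i)"] Suc.prems by simp
  from tendsto_divide[OF this tendsto_const, of "1 + real m"]
  have quotient_deriv: "((\<lambda>x. D (Suc 0) x / ((1 + real m) * (x - b) ^ m))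
      \<longlongrightarrow> D (Suc m) b / fact (Suc m)) (at b)"
    by (simp only: divide_divide_eq_left fact_Suc of_nat_Suc mult.commute[of _ "1 + real m"])
  have "((\<lambda>x. x - b) has_real_derivative 1) (at x)" for x
    by (auto intro!: derivative_eq_intros)
  from DERIV_power_Suc[OF this, of m]
  have denom_deriv: "((\<lambda>x. (x - b) ^ Suc m) has_real_derivative (1 + real m) * (x - b) ^ m) (at x)"
    for x
    by simp
  have "isCont (D 0) b" using Suc.prems(1) by (intro DERIV_isCont)
  then have num_lim: "(D 0 \<longlongrightarrow> 0) (at b)" using Suc.prems(2)[of 0] by (simp add: isCont_def)
  have denom_lim: "((\<lambda>x. (x - b) ^ Suc m) \<longlongrightarrow> 0) (at b)"
    by (auto intro!: tendsto_eq_intros)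
  have near: "\<forall>\<^sub>F x in at b. x \<noteq> b" by (simp add: eventually_at_filter)
  then have denom_nz: "\<forall>\<^sub>F x in at b. (x - b) ^ Suc m \<noteq> 0"
    by (rule eventually_mono) simp
  from near have denom_deriv_nz: "\<forall>\<^sub>F x in at b. (1 + real m) * (x - b) ^ m \<noteq> 0"
    by (rule eventually_mono) (simp add: add_nonneg_eq_0_iff)
  show ?case
    by (rule lhopital[OF num_lim denom_lim denom_nz denom_deriv_nz _ _ quotient_deriv];
        intro always_eventually allI Suc.prems(1) denom_deriv)
qed

text \<open>The same for a smooth complex-valued function, via real and imaginary parts.\<close>
lemma cinf_taylor_quotient:
  assumes f: "cinf f" and zero: "\<And>j. j < m \<Longrightarrow> nderiv j f b = 0"
  shows "((\<lambda>x. f x / of_real ((x - b) ^ m)) \<longlongrightarrow> nderiv m f b / of_real (fact m)) (at b)"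
proof -
  have "((\<lambda>x. Re (nderiv 0 f x) / (x - b) ^ m) \<longlongrightarrow> Re (nderiv m f b) / fact m) (at b)"
    by (rule real_taylor_quotient[where D = "\<lambda>i t. Re (nderiv i f t)",
              OF has_field_derivative_Re[OF cinf_has_vector_derivative[OF f]]])
       (simp add: zero)
  moreover have "((\<lambda>x. Im (nderiv 0 f x) / (x - b) ^ m) \<longlongrightarrow> Im (nderiv m f b) / fact m) (at b)"
    by (rule real_taylor_quotient[where D = "\<lambda>i t. Im (nderiv i f t)",
              OF has_field_derivative_Im[OF cinf_has_vector_derivative[OF f]]])
       (simp add: zero)
  ultimately show ?thesis
    unfolding tendsto_complex_iff Re_divide_of_real Im_divide_of_real by simp
qed

lemma cinf_quotient_limit:
  assumes f: "cinf f" and g: "cinf g" and zero_f: "\<And>j. j < r \<Longrightarrow> nderiv j f b = 0"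
    and zero_g: "\<And>j. j < r \<Longrightarrow> nderiv j g b = 0" and nonzero: "nderiv r g b \<noteq> 0"
  shows "((\<lambda>x. f x / g x) \<longlongrightarrow> nderiv r f b / nderiv r g b) (at b)"
proof -
  let ?scale = "\<lambda>x. of_real ((x - b) ^ r) :: complex"
  have "((\<lambda>x. (f x / ?scale x) / (g x / ?scale x)) \<longlongrightarrow>
      (nderiv r f b / of_real (fact r)) / (nderiv r g b / of_real (fact r))) (at b)"
    by (rule tendsto_divide[OF cinf_taylor_quotient[OF f zero_f] cinf_taylor_quotient[OF g zero_g]])
       (simp_all add: nonzero)
  moreover have "\<forall>\<^sub>F x in at b. (f x / ?scale x) / (g x / ?scale x) = f x / g x"
    by (simp add: eventually_at_filter)
  ultimately show ?thesis
    by (simp add: Lim_transform_eventually)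
qed

section \<open>The recurrence\<close>

locale bernstein_pair =
  fixes bl :: "complex list" and l :: complex and n :: nat and a b :: real
  assumes length_bl: "length bl = n" and n_pos: "1 \<le> n" and a_ne_b: "a \<noteq> b"
    and cheb_ls: "ext_cheb (bl @ [l]) {a, b}" and cheb_bl: "ext_cheb bl {a, b}"
begin

abbreviation P :: "nat \<Rightarrow> real \<Rightarrow> complex" where "P \<equiv> bern (bl @ [l]) a b"
abbreviation Q :: "nat \<Rightarrow> real \<Rightarrow> complex" where "Q \<equiv> bern bl a b"

abbreviation q :: "nat \<Rightarrow> real \<Rightarrow> complex" where "q k \<equiv> diffop [l] (P k)"

definition d :: "nat \<Rightarrow> complex" where
  "d k = nderiv (n - k) (P k) b / nderiv (n - 1 - k) (Q k) b"

lemma P_props: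
  assumes "k \<le> n"
  shows "P k \<in> Espace (bl @ [l]) \<and> zero_order (P k) a k \<and> zero_order (P k) b (n - k)
    \<and> nderiv k (P k) a = 1"
  using bern_props[OF cheb_ls a_ne_b _ assms] length_bl by simp

lemma Q_props:
  assumes "k \<le> n - 1"
  shows "Q k \<in> Espace bl \<and> zero_order (Q k) a k \<and> zero_order (Q k) b (n - 1 - k)
    \<and> nderiv k (Q k) a = 1"
  using bern_props[OF cheb_bl a_ne_b _ assms] length_bl n_pos by simp

lemma Q_lincomb:
  assumes "i \<le> n - 1" "k \<le> n - 1"
  shows "(\<lambda>x. c * Q i x + e * Q k x) \<in> Espace bl"
    and "nderiv j (\<lambda>x. c * Q i x + e * Q k x) x = c * nderiv j (Q i) x + e * nderiv j (Q k) x"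
  using Q_props[OF assms(1)] Q_props[OF assms(2)]
  by (auto intro: Espace_lincomb simp: nderiv_lincomb Espace_cinf)

lemma q_unique:
  assumes "k \<le> n" and g: "g \<in> Espace bl"
    and at_a: "\<And>j. j < k \<Longrightarrow> nderiv j g a = (if Suc j = k then 1 else 0)"
    and at_b: "\<And>j. j < n - k \<Longrightarrow> nderiv j g b = (if Suc j = n - k then nderiv (n - k) (P k) b else 0)"
  shows "q k = g"
proof (rule ext_cheb_agree[OF cheb_bl a_ne_b _ g, of _ k "n - k"])
  have P: "P k \<in> Espace (bl @ [l])" "zero_order (P k) a k" "zero_order (P k) b (n - k)"
    "nderiv k (P k) a = 1"
    using P_props[OF \<open>k \<le> n\<close>] by auto
  show "q k \<in> Espace bl" using diffop_single_Espace[OF P(1)] .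
  show "\<forall>j<k. nderiv j (q k) a = nderiv j g a"
    using diffop_single_zero_order[OF Espace_cinf[OF P(1)] P(2)] P(4) at_a by simp
  show "\<forall>j<n - k. nderiv j (q k) b = nderiv j g b"
    using diffop_single_zero_order[OF Espace_cinf[OF P(1)] P(3)] at_b by simp
qed (use length_bl \<open>k \<le> n\<close> in simp)

text \<open>The coefficient d k is the limit of P_k' / Q_k at b, where both vanish to order n - 1 - k,
  and it is nonzero because both orders are exact.\<close>
lemma d_limit:
  assumes "k < n"
  shows "d k \<noteq> 0 \<and> ((\<lambda>x. nderiv 1 (P k) x / Q k x) \<longlongrightarrow> d k) (at b)"
proof -
  have P: "P k \<in> Espace (bl @ [l])" "zero_order (P k) b (n - k)"
    using P_props[of k] assms by auto
  have Q: "Q k \<in> Espace bl" "zero_order (Q k) b (n - 1 - k)"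
    using Q_props[of k] assms by auto
  have order: "Suc (n - 1 - k) = n - k" using assms by simp
  have "nderiv j (nderiv 1 (P k)) b = 0" if "j < n - 1 - k" for j
  proof -
    have "Suc j < n - k" using that by simp
    then show ?thesis using P(2) unfolding zero_order_def nderiv_Suc_inner[symmetric] by blast
  qed
  then have "((\<lambda>x. nderiv 1 (P k) x / Q k x)
      \<longlongrightarrow> nderiv (n - 1 - k) (nderiv 1 (P k)) b / nderiv (n - 1 - k) (Q k) b) (at b)"
    using Q(2) unfolding zero_order_def
    by (intro cinf_quotient_limit[OF cinf_deriv[OF Espace_cinf[OF P(1)]] Espace_cinf[OF Q(1)]]) auto
  moreover have "nderiv (n - 1 - k) (nderiv 1 (P k)) b = nderiv (n - k) (P k) b"
    by (simp only: nderiv_Suc_inner[symmetric] order)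
  moreover have "d k \<noteq> 0" using P(2) Q(2) by (simp add: d_def zero_order_def)
  ultimately show ?thesis by (simp add: d_def)
qed

lemma d_cancel:
  assumes "k \<le> n - 1"
  shows "d k * nderiv (n - 1 - k) (Q k) b = nderiv (n - k) (P k) b"
  using Q_props[OF assms] by (simp add: d_def zero_order_def)

lemma recurrence_middle:
  assumes "1 \<le> k" "k \<le> n - 1"
  shows "q k = (\<lambda>x. Q (k - 1) x + d k * Q k x)"
proof (rule q_unique)
  have prev: "zero_order (Q (k - 1)) a (k - 1)" "nderiv (k - 1) (Q (k - 1)) a = 1"
    "zero_order (Q (k - 1)) b (n - k)"
    using Q_props[of "k - 1"] assms by auto
  have cur: "zero_order (Q k) a k" "zero_order (Q k) b (n - 1 - k)"
    using Q_props[of k] assms by auto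
  have lincomb: "(\<lambda>x. Q (k - 1) x + d k * Q k x) \<in> Espace bl"
    "nderiv j (\<lambda>x. Q (k - 1) x + d k * Q k x) x = nderiv j (Q (k - 1)) x + d k * nderiv j (Q k) x"
    for j x
    using Q_lincomb[where i = "k - 1" and k = k and c = 1 and e = "d k"] assms by simp_all
  show "k \<le> n" "(\<lambda>x. Q (k - 1) x + d k * Q k x) \<in> Espace bl"
    using assms lincomb(1) by auto
  show "nderiv j (\<lambda>x. Q (k - 1) x + d k * Q k x) a = (if Suc j = k then 1 else 0)"
    if "j < k" for j
  proof (cases "Suc j = k")
    case True
    then have "nderiv j (Q (k - 1)) a = 1" using prev(2) by (metis diff_Suc_1)
    then show ?thesis unfolding lincomb(2) using True zero_order_below[OF cur(1) that] by simp
  next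
    case False
    then have "j < k - 1" using that by simp
    then show ?thesis unfolding lincomb(2)
      using False zero_order_below[OF prev(1)] zero_order_below[OF cur(1) that] by simp
  qed
  show "nderiv j (\<lambda>x. Q (k - 1) x + d k * Q k x) b
      = (if Suc j = n - k then nderiv (n - k) (P k) b else 0)" if "j < n - k" for j
  proof (cases "Suc j = n - k")
    case True
    then have "j = n - 1 - k" by simp
    then show ?thesis unfolding lincomb(2)
      using True d_cancel[OF assms(2)] zero_order_below[OF prev(3) that] by simp
  next
    case False
    then have "j < n - 1 - k" using that by simp
    then show ?thesis unfolding lincomb(2)
      using False zero_order_below[OF prev(3) that] zero_order_below[OF cur(2)] by simp
  qed
qed

lemma recurrence_first: "q 0 = (\<lambda>x. d 0 * Q 0 x)"
proof (rule q_unique)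
  have first: "zero_order (Q 0) b (n - 1)"
    using Q_props[of 0] by auto
  have lincomb: "(\<lambda>x. d 0 * Q 0 x) \<in> Espace bl" "nderiv j (\<lambda>x. d 0 * Q 0 x) x = d 0 * nderiv j (Q 0) x"
    for j x
    using Q_lincomb[where i = 0 and k = 0 and c = 0 and e = "d 0"] by simp_all
  show "0 \<le> n" "(\<lambda>x. d 0 * Q 0 x) \<in> Espace bl"
    "\<And>j. j < 0 \<Longrightarrow> nderiv j (\<lambda>x. d 0 * Q 0 x) a = (if Suc j = 0 then 1 else 0)"
    using lincomb(1) by auto
  show "nderiv j (\<lambda>x. d 0 * Q 0 x) b = (if Suc j = n - 0 then nderiv (n - 0) (P 0) b else 0)"
    if "j < n - 0" for j
  proof (cases "Suc j = n")
    case True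
    then have "j = n - 1 - 0" by simp
    then show ?thesis unfolding lincomb(2) using True d_cancel[of 0] by simp
  next
    case False
    then have "j < n - 1" using that by simp
    then show ?thesis unfolding lincomb(2) using False zero_order_below[OF first] by simp
  qed
qed

lemma recurrence_last: "q n = Q (n - 1)"
proof (rule q_unique)
  have last: "Q (n - 1) \<in> Espace bl" "zero_order (Q (n - 1)) a (n - 1)"
    "nderiv (n - 1) (Q (n - 1)) a = 1"
    using Q_props[of "n - 1"] by auto
  show "n \<le> n" "Q (n - 1) \<in> Espace bl"
    "\<And>j. j < n - n \<Longrightarrow> nderiv j (Q (n - 1)) b = (if Suc j = n - n then nderiv (n - n) (P n) b else 0)"
    using last(1) by auto
  show "nderiv j (Q (n - 1)) a = (if Suc j = n then 1 else 0)" if "j < n" for j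
  proof (cases "Suc j = n")
    case True
    then have "j = n - 1" by simp
    then show ?thesis using True last(3) by simp
  next
    case False
    then have "j < n - 1" using that by simp
    then show ?thesis using False zero_order_below[OF last(2)] by simp
  qed
qed

end

theorem mainTheorem8:
  fixes ls :: "complex list" and n :: nat and a b :: real
  assumes "length ls = n + 1" and "n \<ge> 1" and "a \<noteq> b"
    and "ext_cheb ls {a, b}" and "ext_cheb (butlast ls) {a, b}"
  shows "\<exists>d :: nat \<Rightarrow> complex.
     (\<forall>k<n. d k \<noteq> 0 \<and>
        ((\<lambda>x. nderiv 1 (bern ls a b k) x / bern (butlast ls) a b k x) \<longlongrightarrow> d k) (at b))
   \<and> (\<forall>k. 1 \<le> k \<and> k \<le> n - 1 \<longrightarrow>
        diffop [last ls] (bern ls a b k)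
          = (\<lambda>x. bern (butlast ls) a b (k - 1) x + d k * bern (butlast ls) a b k x))
   \<and> diffop [last ls] (bern ls a b 0) = (\<lambda>x. d 0 * bern (butlast ls) a b 0 x)
   \<and> diffop [last ls] (bern ls a b n) = bern (butlast ls) a b (n - 1)"
proof -
  have "ls \<noteq> []" using assms(1) by auto
  then have ls: "butlast ls @ [last ls] = ls" by simp
  interpret bernstein_pair "butlast ls" "last ls" n a b
    by unfold_locales (use assms ls in auto)
  show ?thesis
    using d_limit recurrence_middle recurrence_first recurrence_last
    unfolding ls by (intro exI[of _ d]) auto
qed

end
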